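(* Let $k\ge1$, let $F$ be a 2-factor on $4k$ vertices, and let $C$ be a red/blue-coloring of $K_{4k}$ such that the red edges form two disjoint cliques of size $2k$ each (all other edges being blue). Then $C$ contains a copy of $F$ with at least $4k-2$ red edges and a copy of $F$ with at least $8k/3$ blue edges.
   Context: A 2-factor on $N$ vertices is a 2-regular graph on $N$ vertices. A copy of $F$ is a subgraph isomorphic to $F$. *)

theory Defs
  imports Main
begin

definition simple_graph :: "'a set \<Rightarrow> ('a \<Rightarrow> 'a \<Rightarrow> bool) \<Rightarrow> bool" where
  "simple_graph W E \<longleftrightarrow> finite W \<and> (\<forall>u v. E u v \<longrightarrow> E v u) \<and> (\<forall>u. \<not> E u u)
     \<and> (\<forall>u v. E u v \<longrightarrow> u \<in> W \<and> v \<in> W)"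

definition two_factor :: "'a set \<Rightarrow> ('a \<Rightarrow> 'a \<Rightarrow> bool) \<Rightarrow> bool" where
  "two_factor W E \<longleftrightarrow> simple_graph W E \<and> (\<forall>v\<in>W. card {u\<in>W. E v u} = 2)"

definition edges :: "'a set \<Rightarrow> ('a \<Rightarrow> 'a \<Rightarrow> bool) \<Rightarrow> 'a set set" where
  "edges W E = {{u, v} | u v. u \<in> W \<and> v \<in> W \<and> E u v}"

text \<open>The colouring col of the complete graph assigns to each pair of
  distinct vertices a colour (True = red, False = blue).\<close>
definition colour_count :: "'a set \<Rightarrow> ('a \<Rightarrow> 'a \<Rightarrow> bool) \<Rightarrow> ('a \<Rightarrow> 'b)
    \<Rightarrow> ('b \<Rightarrow> 'b \<Rightarrow> bool) \<Rightarrow> bool \<Rightarrow> nat" where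
  "colour_count W E phi col c =
     card {e \<in> edges W E. \<exists>u v. e = {u, v} \<and> E u v \<and> col (phi u) (phi v) = c}"

definition is_copy :: "'a set \<Rightarrow> ('a \<Rightarrow> 'b) \<Rightarrow> 'b set \<Rightarrow> bool" where
  "is_copy W phi V \<longleftrightarrow> inj_on phi W \<and> phi ` W \<subseteq> V"

end

(*
  A copy of F is determined, as far as colours go, by the set X of vertices of F sent
  into the clique A: edges with both ends on the same side of X become red, cut edges
  blue.  F has 4k edges, so it suffices to find a 2k-set X with at most 2 cut edges,
  and a 2k-set X with at most 4k/3 uncut edges.

  For the first, grow X one vertex at a time, adding an endpoint of a cut edge whenever
  the cut is nonempty: as all degrees are at most 2, that vertex removes one cut edge and
  adds at most one, so the cut never exceeds 2 edges.

  For the second, show by induction that every graph with n vertices and maximum degree 2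
  has a balanced X with at most (n - d)/3 uncut edges, where d = 1 if some vertex has
  degree below 2 and d = 0 otherwise.  Remove an edge xy, split the rest by induction, and
  put x and y on opposite sides, choosing which of them joins X so that the other edge at
  x is cut too.  At most one uncut edge arises, at y; and if y had degree 2, its other
  neighbour has degree below 2 in the smaller graph, which pays for that edge.
*)
theory Submission
  imports Defs
begin

section \<open>Cut and uncut edges\<close>

definition neighbours :: "'a set \<Rightarrow> ('a \<Rightarrow> 'a \<Rightarrow> bool) \<Rightarrow> 'a \<Rightarrow> 'a set" where
  "neighbours W E v = {u \<in> W. E v u}"

definition induced :: "('a \<Rightarrow> 'a \<Rightarrow> bool) \<Rightarrow> 'a set \<Rightarrow> 'a \<Rightarrow> 'a \<Rightarrow> bool" where
  "induced E S u v \<longleftrightarrow> E u v \<and> u \<in> S \<and> v \<in> S"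

definition inner_edges :: "('a \<Rightarrow> 'a \<Rightarrow> bool) \<Rightarrow> 'a set \<Rightarrow> 'a set set" where
  "inner_edges E X = {{u, v} | u v. E u v \<and> (u \<in> X \<longleftrightarrow> v \<in> X)}"

definition cut_edges :: "('a \<Rightarrow> 'a \<Rightarrow> bool) \<Rightarrow> 'a set \<Rightarrow> 'a set set" where
  "cut_edges E X = {{u, v} | u v. E u v \<and> u \<in> X \<and> v \<notin> X}"

definition balanced :: "'a set \<Rightarrow> 'a set \<Rightarrow> bool" where
  "balanced W X \<longleftrightarrow> card X \<le> card (W - X) + 1 \<and> card (W - X) \<le> card X + 1"

lemma simple_graphD:
  assumes "simple_graph W E"
  shows "finite W" and "E u v \<Longrightarrow> E v u" and "\<not> E u u"
    and "E u v \<Longrightarrow> u \<in> W" and "E u v \<Longrightarrow> v \<in> W"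
  using assms unfolding simple_graph_def by blast+

lemma finite_neighbours: "simple_graph W E \<Longrightarrow> finite (neighbours W E v)"
  unfolding neighbours_def by (simp add: simple_graphD(1))

lemma finite_edges: "simple_graph W E \<Longrightarrow> finite (edges W E)"
  by (rule finite_subset[of _ "Pow W"]) (auto simp: edges_def simple_graphD(1))

lemma cut_edges_altdef:
  assumes "simple_graph W E"
  shows "cut_edges E X = {{u, v} | u v. E u v \<and> \<not> (u \<in> X \<longleftrightarrow> v \<in> X)}"
proof (intro equalityI subsetI)
  fix e assume "e \<in> {{u, v} | u v. E u v \<and> \<not> (u \<in> X \<longleftrightarrow> v \<in> X)}"
  then obtain u v where e: "e = {u, v}" "E u v" "\<not> (u \<in> X \<longleftrightarrow> v \<in> X)" by blast
  then have "e = {u, v} \<and> E u v \<and> u \<in> X \<and> v \<notin> X \<or> e = {v, u} \<and> E v u \<and> v \<in> X \<and> u \<notin> X"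
    using simple_graphD(2)[OF assms, of u v] by (auto simp: insert_commute)
  then show "e \<in> cut_edges E X" unfolding cut_edges_def by blast
qed (auto simp: cut_edges_def)

lemma edges_eq_inner_Un_cut:
  assumes "simple_graph W E"
  shows "edges W E = inner_edges E X \<union> cut_edges E X"
  using simple_graphD(4,5)[OF assms]
  unfolding edges_def inner_edges_def cut_edges_altdef[OF assms] by blast

lemma finite_inner_edges: "simple_graph W E \<Longrightarrow> finite (inner_edges E X)"
  by (metis finite_Un finite_edges edges_eq_inner_Un_cut)

lemma finite_cut_edges: "simple_graph W E \<Longrightarrow> finite (cut_edges E X)"
  by (metis finite_Un finite_edges edges_eq_inner_Un_cut)

lemma card_inner_edges_plus_card_cut_edges:
  assumes "simple_graph W E"
  shows "card (inner_edges E X) + card (cut_edges E X) = card (edges W E)"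
proof -
  have "inner_edges E X \<inter> cut_edges E X = {}"
    unfolding inner_edges_def cut_edges_def by (auto simp: doubleton_eq_iff)
  then show ?thesis
    using card_Un_disjoint finite_inner_edges[OF assms] finite_cut_edges[OF assms]
      edges_eq_inner_Un_cut[OF assms] by metis
qed

lemma card_edges_containing_vertex:
  assumes "simple_graph W E"
  shows "card {e \<in> edges W E. v \<in> e} = card (neighbours W E v)"
proof -
  have "{e \<in> edges W E. v \<in> e} = (\<lambda>u. {v, u}) ` neighbours W E v"
  proof (intro equalityI subsetI)
    fix e assume "e \<in> {e \<in> edges W E. v \<in> e}"
    then obtain a b where "e = {a, b}" "E a b" "v = a \<or> v = b"
      unfolding edges_def by blast
    then have "e = {v, b} \<and> E v b \<or> e = {v, a} \<and> E v a"
      using simple_graphD(2)[OF assms, of a b] by (auto simp: insert_commute)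
    then show "e \<in> (\<lambda>u. {v, u}) ` neighbours W E v"
      using simple_graphD(5)[OF assms] unfolding neighbours_def by blast
  next
    fix e assume "e \<in> (\<lambda>u. {v, u}) ` neighbours W E v"
    then show "e \<in> {e \<in> edges W E. v \<in> e}"
      using simple_graphD(4)[OF assms] unfolding neighbours_def edges_def by blast
  qed
  moreover have "inj_on (\<lambda>u. {v, u}) (neighbours W E v)"
    by (auto simp: inj_on_def doubleton_eq_iff)
  ultimately show ?thesis by (simp add: card_image)
qed

lemma sum_degrees_eq_twice_card_edges:
  assumes "simple_graph W E"
  shows "(\<Sum>v\<in>W. card (neighbours W E v)) = 2 * card (edges W E)"
proof -
  have "card {v \<in> W. v \<in> e} = 2" if e: "e \<in> edges W E" for e
  proof -
    obtain u v where "e = {u, v}" "u \<in> W" "v \<in> W" "E u v"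
      using e unfolding edges_def by blast
    moreover have "u \<noteq> v" using \<open>E u v\<close> simple_graphD(3)[OF assms] by blast
    ultimately have "{w \<in> W. w \<in> e} = {u, v}" "card {u, v} = 2" by auto
    then show ?thesis by simp
  qed
  then have "(\<Sum>v\<in>W. card {e \<in> edges W E. v \<in> e}) = 2 * card (edges W E)"
    using sum_multicount[of W "edges W E"] simple_graphD(1)[OF assms] finite_edges[OF assms]
    by blast
  then show ?thesis by (simp add: card_edges_containing_vertex[OF assms])
qed

lemma card_Diff_edge:
  assumes "simple_graph W E" and "E x y"
  shows "card (W - {x, y}) + 2 = card W"
proof -
  have "x \<noteq> y" using assms(2) simple_graphD(3)[OF assms(1)] by blast
  then have "{x, y} \<subseteq> W" "card {x, y} = 2" using assms(2) simple_graphD(4,5)[OF assms(1)] by auto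
  then show ?thesis
    using card_Diff_subset[of "{x, y}" W] card_mono[OF simple_graphD(1)[OF assms(1)], of "{x, y}"]
    by simp
qed

lemma card_edges_two_factor: "two_factor W E \<Longrightarrow> card (edges W E) = card W"
  using sum_degrees_eq_twice_card_edges[of W E]
  by (simp add: two_factor_def neighbours_def)

section \<open>A small cut of prescribed size\<close>

lemma cut_edges_insert_Un:
  assumes "simple_graph W E" and "w \<notin> X"
  shows "cut_edges E (insert w X) \<union> (\<lambda>u. {w, u}) ` (neighbours W E w \<inter> X)
       = cut_edges E X \<union> (\<lambda>u. {w, u}) ` (neighbours W E w - X)"
  (is "_ \<union> ?edge ` (?N \<inter> X) = _ \<union> ?edge ` (?N - X)")
proof (intro equalityI subsetI)
  note sym = simple_graphD(2)[OF assms(1)]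
  fix e assume "e \<in> cut_edges E (insert w X) \<union> ?edge ` (?N \<inter> X)"
  then consider u v where "e = {u, v}" "E u v" "u \<in> insert w X" "v \<notin> insert w X"
    | u where "e = {w, u}" "u \<in> ?N \<inter> X"
    unfolding cut_edges_def by blast
  then show "e \<in> cut_edges E X \<union> ?edge ` (?N - X)"
  proof cases
    case (1 u v)
    then show ?thesis
      using simple_graphD(5)[OF assms(1)] unfolding cut_edges_def neighbours_def by blast
  next
    case (2 u)
    then have "e = {u, w}" "E u w" using sym[of w u] by (auto simp: neighbours_def insert_commute)
    then show ?thesis using 2 \<open>w \<notin> X\<close> unfolding cut_edges_def by blast
  qed
next
  note sym = simple_graphD(2)[OF assms(1)]
  fix e assume "e \<in> cut_edges E X \<union> ?edge ` (?N - X)"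
  then consider u v where "e = {u, v}" "E u v" "u \<in> X" "v \<notin> X"
    | u where "e = {w, u}" "u \<in> ?N - X"
    unfolding cut_edges_def by blast
  then show "e \<in> cut_edges E (insert w X) \<union> ?edge ` (?N \<inter> X)"
  proof cases
    case (1 u v)
    show ?thesis
    proof (cases "v = w")
      case True
      then have "e = {w, u}" "u \<in> ?N \<inter> X"
        using 1 sym[OF 1(2)] simple_graphD(4)[OF assms(1) 1(2)]
        by (auto simp: neighbours_def insert_commute)
      then show ?thesis by blast
    next
      case False
      then show ?thesis using 1 unfolding cut_edges_def by blast
    qed
  next
    case (2 u)
    then have "E w u" "u \<notin> insert w X"
      using simple_graphD(3)[OF assms(1)] by (auto simp: neighbours_def)
    then show ?thesis using 2 unfolding cut_edges_def by blast
  qed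
qed

lemma card_cut_edges_insert:
  assumes "simple_graph W E" and "w \<notin> X"
  shows "card (cut_edges E (insert w X)) + card (neighbours W E w \<inter> X)
       = card (cut_edges E X) + card (neighbours W E w - X)"
proof -
  let ?N = "neighbours W E w" and ?edge = "\<lambda>u. {w, u}"
  have "cut_edges E (insert w X) \<inter> ?edge ` (?N \<inter> X) = {}"
    "cut_edges E X \<inter> ?edge ` (?N - X) = {}"
    using \<open>w \<notin> X\<close> unfolding cut_edges_def by (auto simp: doubleton_eq_iff)
  moreover have "card (?edge ` A) = card A" for A
    by (rule card_image) (auto simp: inj_on_def doubleton_eq_iff)
  moreover have "finite (?edge ` A)" if "A \<subseteq> ?N" for A
    using finite_subset[OF that finite_neighbours[OF assms(1)]] by blast
  ultimately show ?thesis
    using cut_edges_insert_Un[OF assms] finite_cut_edges[OF assms(1)]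
    by (metis Diff_subset Int_lower1 card_Un_disjoint)
qed

lemma exists_insert_keeping_cut_small:
  assumes "simple_graph W E" and "\<forall>v\<in>W. card (neighbours W E v) \<le> 2"
    and "X \<subset> W" and "card (cut_edges E X) \<le> 2"
  shows "\<exists>w\<in>W - X. card (cut_edges E (insert w X)) \<le> 2"
proof (cases "cut_edges E X = {}")
  case True
  obtain w where w: "w \<in> W - X" using \<open>X \<subset> W\<close> by blast
  have "card (neighbours W E w - X) \<le> card (neighbours W E w)"
    by (rule card_mono[OF finite_neighbours[OF assms(1)]]) blast
  then show ?thesis
    using card_cut_edges_insert[OF assms(1), of w X] w True assms(2) by force
next
  case False
  then obtain u w where "E u w" "u \<in> X" "w \<notin> X" unfolding cut_edges_def by blast
  then have w: "w \<in> W - X" and "u \<in> neighbours W E w \<inter> X"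
    using simple_graphD(2,4,5)[OF assms(1) \<open>E u w\<close>] by (auto simp: neighbours_def)
  then have "card (neighbours W E w \<inter> X) \<ge> 1"
    using finite_neighbours[OF assms(1)] by (metis One_nat_def Suc_leI card_gt_0_iff empty_iff finite_Int)
  moreover have "card (neighbours W E w \<inter> X) + card (neighbours W E w - X) \<le> 2"
    using card_Int_Diff[OF finite_neighbours[OF assms(1)], of w X] assms(2) w by force
  ultimately show ?thesis
    using card_cut_edges_insert[OF assms(1), of w X] w assms(4) by force
qed

lemma exists_subset_with_small_cut:
  assumes "simple_graph W E" and "\<forall>v\<in>W. card (neighbours W E v) \<le> 2" and "m \<le> card W"
  shows "\<exists>X\<subseteq>W. card X = m \<and> card (cut_edges E X) \<le> 2"
  using assms(3)
proof (induction m)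
  case 0
  have "cut_edges E {} = {}" unfolding cut_edges_def by blast
  then show ?case by (intro exI[of _ "{}"]) simp
next
  case (Suc m)
  then obtain X where X: "X \<subseteq> W" "card X = m" "card (cut_edges E X) \<le> 2" by auto
  then have "X \<subset> W" using Suc.prems by auto
  then obtain w where "w \<in> W - X" "card (cut_edges E (insert w X)) \<le> 2"
    using exists_insert_keeping_cut_small[OF assms(1,2) _ X(3)] by blast
  moreover have "finite X" using X(1) simple_graphD(1)[OF assms(1)] finite_subset by blast
  ultimately show ?case using X by (intro exI[of _ "insert w X"]) auto
qed

section \<open>A balanced partition with few uncut edges\<close>

lemma simple_graph_induced:
  assumes "simple_graph W E" and "S \<subseteq> W"
  shows "simple_graph S (induced E S)"
  using simple_graphD[OF assms(1)] finite_subset[OF assms(2)]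
  unfolding simple_graph_def induced_def by blast

lemma induced_remove_isolated:
  assumes "simple_graph W E" and "neighbours W E u = {}"
  shows "induced E (W - {u}) = E"
  using simple_graphD[OF assms(1)] assms(2)
  unfolding induced_def neighbours_def fun_eq_iff by blast

lemma inner_edges_insert_isolated:
  assumes "simple_graph W E" and "neighbours W E u = {}"
  shows "inner_edges E (insert u X) = inner_edges E X"
proof -
  have "E p q \<Longrightarrow> p \<noteq> u \<and> q \<noteq> u" for p q
    using simple_graphD[OF assms(1)] assms(2) unfolding neighbours_def by blast
  then show ?thesis unfolding inner_edges_def by blast
qed

lemma balanced_insert_isolated:
  assumes "finite W" and "u \<in> W" and "X \<subseteq> W - {u}" and "balanced (W - {u}) X"
  shows "balanced W X \<or> balanced W (insert u X)"
proof -
  have "finite X" using assms(1,3) finite_subset by blast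
  moreover have "W - X = insert u (W - {u} - X)" and "W - insert u X = W - {u} - X"
    using assms(2,3) by auto
  ultimately show ?thesis
    using assms(1,3,4) unfolding balanced_def by (auto simp: card_insert_if)
qed

lemma balanced_insert_pair:
  assumes "finite W" and "x \<in> W" and "y \<in> W" and "x \<noteq> y" and "z \<in> {x, y}"
    and "X \<subseteq> W - {x, y}" and "balanced (W - {x, y}) X"
  shows "balanced W (insert z X)"
proof -
  obtain z' where "{z, z'} = {x, y}" "z \<noteq> z'" using assms(4,5) by blast
  then have "W - insert z X = insert z' (W - {x, y} - X)" and "z \<notin> X" "z' \<notin> W - {x, y} - X"
    using assms(2,3,6) by auto
  moreover have "finite X" using assms(1,6) finite_subset by blast
  ultimately show ?thesis
    using assms(1,7) unfolding balanced_def by simp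
qed

lemma exists_insert_cutting_edges_at:
  assumes "simple_graph W E" and "\<forall>v\<in>W. card (neighbours W E v) \<le> 2"
    and "E x y" and "X \<subseteq> W - {x, y}"
  shows "\<exists>z\<in>{x, y}. \<forall>q. E x q \<longrightarrow> (x \<in> insert z X \<longleftrightarrow> q \<notin> insert z X)"
proof -
  note irr = simple_graphD(3)[OF assms(1)] and in_W = simple_graphD(4,5)[OF assms(1)]
  have "y \<in> neighbours W E x" using assms(3) in_W by (simp add: neighbours_def)
  then have "card (neighbours W E x - {y}) \<le> 1"
    using assms(2) in_W(1)[OF assms(3)] by (force simp: card_Diff_singleton)
  then have "\<forall>a\<in>neighbours W E x - {y}. \<forall>b\<in>neighbours W E x - {y}. a = b"
    using card_le_Suc0_iff_eq[OF finite_Diff[OF finite_neighbours[OF assms(1)]]] by simp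
  then obtain r where r: "neighbours W E x - {y} \<subseteq> {r}"
    by (cases "neighbours W E x - {y} = {}") blast+
  define z where "z = (if r \<in> X then y else x)"
  have "x \<in> insert z X \<longleftrightarrow> q \<notin> insert z X" if "E x q" for q
  proof (cases "q = y")
    case False
    then have "q \<in> neighbours W E x - {y}" using that in_W by (simp add: neighbours_def)
    then have "q = r" using r by blast
    then show ?thesis using assms(3,4) that irr by (auto simp: z_def)
  qed (use assms(3,4) irr in \<open>auto simp: z_def\<close>)
  moreover have "z \<in> {x, y}" unfolding z_def by simp
  ultimately show ?thesis by blast
qed

lemma inner_edges_insert_subset:
  assumes "simple_graph W E" and "X \<subseteq> W - {x, y}" and "z \<in> {x, y}"
    and cut_at_x: "\<And>q. E x q \<Longrightarrow> x \<in> insert z X \<longleftrightarrow> q \<notin> insert z X"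
  shows "inner_edges E (insert z X)
    \<subseteq> inner_edges (induced E (W - {x, y})) X \<union> (\<lambda>q. {y, q}) ` (neighbours W E y - {x})"
proof
  note sym = simple_graphD(2)[OF assms(1)] and in_W = simple_graphD(4,5)[OF assms(1)]
  fix e assume "e \<in> inner_edges E (insert z X)"
  then obtain p q where e: "e = {p, q}" "E p q" "p \<in> insert z X \<longleftrightarrow> q \<in> insert z X"
    unfolding inner_edges_def by blast
  have "p \<noteq> x" "q \<noteq> x" using e cut_at_x sym by blast+
  consider "p = y" | "q = y" | "p \<in> W - {x, y}" "q \<in> W - {x, y}"
    using e(2) in_W \<open>p \<noteq> x\<close> \<open>q \<noteq> x\<close> by blast
  then show "e \<in> inner_edges (induced E (W - {x, y})) X \<union> (\<lambda>q. {y, q}) ` (neighbours W E y - {x})"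
  proof cases
    case 1
    then have "q \<in> neighbours W E y - {x}" using e(2) \<open>q \<noteq> x\<close> in_W by (simp add: neighbours_def)
    then show ?thesis using e(1) 1 by blast
  next
    case 2
    then have "p \<in> neighbours W E y - {x}" using sym[OF e(2)] \<open>p \<noteq> x\<close> in_W by (simp add: neighbours_def)
    then show ?thesis using e(1) 2 by (auto simp: insert_commute)
  next
    case 3
    then have "induced E (W - {x, y}) p q" "p \<in> X \<longleftrightarrow> q \<in> X"
      using e(2,3) assms(3) by (auto simp: induced_def)
    then show ?thesis using e(1) unfolding inner_edges_def by blast
  qed
qed

lemma card_neighbours_induced_le:
  assumes "simple_graph W E" and "S \<subseteq> W"
  shows "card (neighbours S (induced E S) v) \<le> card (neighbours W E v)"
  by (rule card_mono[OF finite_neighbours[OF assms(1)]])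
    (use assms(2) in \<open>auto simp: neighbours_def induced_def\<close>)

lemma extend_balanced_by_isolated:
  assumes "simple_graph W E" and "u \<in> W" and "neighbours W E u = {}"
    and "X' \<subseteq> W - {u}" and "balanced (W - {u}) X'"
  shows "\<exists>X\<subseteq>W. balanced W X \<and> inner_edges E X = inner_edges E X'"
proof -
  obtain X where X: "X \<in> {X', insert u X'}" "balanced W X"
    using balanced_insert_isolated[OF simple_graphD(1)[OF assms(1)] assms(2,4,5)] by blast
  then have "X \<subseteq> W" "inner_edges E X = inner_edges E X'"
    using assms(2,4) inner_edges_insert_isolated[OF assms(1,3)] by auto
  then show ?thesis using X(2) by blast
qed

lemma extend_balanced_across_edge:
  assumes "simple_graph W E" and "\<forall>v\<in>W. card (neighbours W E v) \<le> 2" and "E x y"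
    and "X' \<subseteq> W - {x, y}" and "balanced (W - {x, y}) X'"
  shows "\<exists>X\<subseteq>W. balanced W X \<and> card (inner_edges E X)
           \<le> card (inner_edges (induced E (W - {x, y})) X') + card (neighbours W E y - {x})"
proof -
  let ?I = "inner_edges (induced E (W - {x, y})) X'" and ?N = "neighbours W E y - {x}"
  obtain z where z: "z \<in> {x, y}" "\<And>q. E x q \<Longrightarrow> x \<in> insert z X' \<longleftrightarrow> q \<notin> insert z X'"
    using exists_insert_cutting_edges_at[OF assms(1-4)] by blast
  have "finite ?I"
    by (rule finite_inner_edges[OF simple_graph_induced[OF assms(1), of "W - {x, y}"]]) blast
  moreover have "finite ?N" using finite_neighbours[OF assms(1)] by blast
  ultimately have "card (inner_edges E (insert z X')) \<le> card (?I \<union> (\<lambda>q. {y, q}) ` ?N)"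
    using inner_edges_insert_subset[OF assms(1,4) z] by (intro card_mono) auto
  also have "\<dots> \<le> card ?I + card ((\<lambda>q. {y, q}) ` ?N)" by (rule card_Un_le)
  also have "\<dots> \<le> card ?I + card ?N" using card_image_le[OF \<open>finite ?N\<close>] by simp
  finally have "card (inner_edges E (insert z X')) \<le> card ?I + card ?N" .
  moreover have "x \<in> W" "y \<in> W" "x \<noteq> y"
    using simple_graphD[OF assms(1)] assms(3) by blast+
  then have "balanced W (insert z X')" "insert z X' \<subseteq> W"
    using balanced_insert_pair[OF simple_graphD(1)[OF assms(1)] _ _ _ z(1) assms(4,5)] z(1) assms(4)
    by auto
  ultimately show ?thesis by blast
qed

lemma max_degree_two_cases:
  assumes "simple_graph W E" and "\<forall>v\<in>W. card (neighbours W E v) \<le> 2"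
  obtains (empty) "W = {}"
    | (isolated) u where "u \<in> W" and "neighbours W E u = {}"
    | (leaf) x y where "E x y" and "neighbours W E y = {x}"
    | (regular) x y where "E x y" and "\<forall>v\<in>W. card (neighbours W E v) = 2"
proof -
  have edge: "E x y" if "x \<in> neighbours W E y" for x y
    using that simple_graphD(2)[OF assms(1), of y x] unfolding neighbours_def by blast
  have "card (neighbours W E v) = 2"
    if "v \<in> W" "neighbours W E v \<noteq> {}" "card (neighbours W E v) \<noteq> 1" for v
  proof -
    have "card (neighbours W E v) \<noteq> 0"
      using that(2) card_0_eq[OF finite_neighbours[OF assms(1)]] by blast
    then show ?thesis using that(1,3) assms(2) by fastforce
  qed
  then consider "W = {}" | "\<exists>u\<in>W. neighbours W E u = {}" | "\<exists>y\<in>W. card (neighbours W E y) = 1"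
    | "W \<noteq> {}" "\<forall>v\<in>W. card (neighbours W E v) = 2"
    by blast
  then show ?thesis
  proof cases
    case 3
    then obtain x y where "neighbours W E y = {x}" by (metis card_1_singletonE)
    then show ?thesis using leaf edge by blast
  next
    case 4
    then obtain y where "y \<in> W" by blast
    then obtain x where "x \<in> neighbours W E y" using 4 by fastforce
    then show ?thesis using regular edge 4 by blast
  qed (use empty isolated in blast)+
qed

lemma low_degree_after_removing_edge:
  assumes "simple_graph W E" and "\<forall>v\<in>W. card (neighbours W E v) = 2" and "E x y"
  shows "\<exists>v\<in>W - {x, y}. card (neighbours (W - {x, y}) (induced E (W - {x, y})) v) < 2"
proof -
  note sym = simple_graphD(2)[OF assms(1)] and irr = simple_graphD(3)[OF assms(1)]
    and in_W = simple_graphD(4,5)[OF assms(1)]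
  have "x \<in> neighbours W E y" using sym[OF assms(3)] in_W(1)[OF assms(3)] by (simp add: neighbours_def)
  then have "card (neighbours W E y - {x}) = 1"
    using assms(2) in_W(2)[OF assms(3)] by (simp add: card_Diff_singleton)
  then obtain w where w: "neighbours W E y - {x} = {w}" by (rule card_1_singletonE)
  then have "E y w" "w \<noteq> x" "w \<in> W" by (auto simp: neighbours_def)
  then have "w \<in> W - {x, y}" and "y \<in> neighbours W E w"
    using irr[of y] sym[of y w] in_W(2)[OF assms(3)] by (auto simp: neighbours_def)
  moreover from this have "card (neighbours W E w - {y}) = 1"
    using assms(2) by (simp add: card_Diff_singleton)
  moreover have "neighbours (W - {x, y}) (induced E (W - {x, y})) w \<subseteq> neighbours W E w - {y}"
    by (auto simp: neighbours_def induced_def)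
  ultimately have "card (neighbours (W - {x, y}) (induced E (W - {x, y})) w) \<le> 1"
    by (metis card_mono finite_Diff finite_neighbours[OF assms(1)])
  then show ?thesis using \<open>w \<in> W - {x, y}\<close> by (intro bexI[of _ w]) auto
qed

lemma exists_balanced_with_few_inner_edges:
  assumes "simple_graph W E" and "\<forall>v\<in>W. card (neighbours W E v) \<le> 2"
  shows "\<exists>X\<subseteq>W. balanced W X \<and>
    3 * card (inner_edges E X) + of_bool (\<exists>v\<in>W. card (neighbours W E v) < 2) \<le> card W"
  using assms
proof (induction "card W" arbitrary: W E rule: less_induct)
  case less
  note graph = less.prems(1) and degree = less.prems(2)
  have "finite W" by (rule simple_graphD(1)[OF graph])
  have IH: "\<exists>X\<subseteq>S. balanced S X \<and> 3 * card (inner_edges (induced E S) X)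
      + of_bool (\<exists>v\<in>S. card (neighbours S (induced E S) v) < 2) \<le> card S" if "S \<subset> W" for S
  proof -
    have "S \<subseteq> W" using that by blast
    then have "\<forall>v\<in>S. card (neighbours S (induced E S) v) \<le> 2"
      using card_neighbours_induced_le[OF graph] degree by (meson order_trans subsetD)
    then show ?thesis
      using less.hyps[OF psubset_card_mono[OF \<open>finite W\<close> that] simple_graph_induced[OF graph]]
        \<open>S \<subseteq> W\<close> by blast
  qed
  from graph degree show ?case
  proof (cases rule: max_degree_two_cases)
    case empty
    then have "inner_edges E {} = {}"
      using simple_graphD(4)[OF graph] unfolding inner_edges_def by blast
    then show ?thesis using empty by (simp add: balanced_def)
  next
    case (isolated u)
    have "W - {u} \<subset> W" using isolated(1) by blast
    from IH[OF this] obtain X' where X': "X' \<subseteq> W - {u}" "balanced (W - {u}) X'"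
        "3 * card (inner_edges E X') \<le> card (W - {u})"
      unfolding induced_remove_isolated[OF graph isolated(2)] by (blast dest: add_leD1)
    obtain X where "X \<subseteq> W" "balanced W X" "inner_edges E X = inner_edges E X'"
      using extend_balanced_by_isolated[OF graph isolated X'(1,2)] by blast
    moreover have "card (W - {u}) + 1 = card W"
      using card_Suc_Diff1[OF \<open>finite W\<close> isolated(1)] by simp
    ultimately show ?thesis using X'(3) by (intro exI[of _ X]) auto
  next
    case (leaf x y)
    have "W - {x, y} \<subset> W" using simple_graphD(4)[OF graph leaf(1)] by blast
    from IH[OF this] obtain X' where X': "X' \<subseteq> W - {x, y}" "balanced (W - {x, y}) X'"
        "3 * card (inner_edges (induced E (W - {x, y})) X') \<le> card (W - {x, y})"
      by (blast dest: add_leD1)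
    obtain X where "X \<subseteq> W" "balanced W X"
        "card (inner_edges E X) \<le> card (inner_edges (induced E (W - {x, y})) X')"
      using extend_balanced_across_edge[OF graph degree leaf(1) X'(1,2)] leaf(2) by auto
    then show ?thesis using X'(3) card_Diff_edge[OF graph leaf(1)] by (intro exI[of _ X]) auto
  next
    case (regular x y)
    have "W - {x, y} \<subset> W" using simple_graphD(4)[OF graph regular(1)] by blast
    from IH[OF this] obtain X' where X': "X' \<subseteq> W - {x, y}" "balanced (W - {x, y}) X'"
        "3 * card (inner_edges (induced E (W - {x, y})) X') + 1 \<le> card (W - {x, y})"
      using low_degree_after_removing_edge[OF graph regular(2,1)] by auto
    have "x \<in> neighbours W E y" "y \<in> W"
      using simple_graphD(2,4,5)[OF graph] regular(1) unfolding neighbours_def by blast+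
    then have "card (neighbours W E y - {x}) = 1"
      using regular(2) by (simp add: card_Diff_singleton)
    then obtain X where "X \<subseteq> W" "balanced W X"
        "card (inner_edges E X) \<le> card (inner_edges (induced E (W - {x, y})) X') + 1"
      using extend_balanced_across_edge[OF graph degree regular(1) X'(1,2)] by auto
    then show ?thesis using X'(3) regular(2) card_Diff_edge[OF graph regular(1)] by (intro exI[of _ X]) auto
  qed
qed

lemma card_balanced_even:
  assumes "finite W" and "X \<subseteq> W" and "balanced W X" and "card W = 2 * m"
  shows "card X = m"
  using assms card_Diff_subset[OF finite_subset[OF assms(2,1)] assms(2)] card_mono[OF assms(1,2)]
  unfolding balanced_def by linarith

section \<open>Copies in the two-clique colouring\<close>

lemma colour_count_by_sides:
  assumes "simple_graph W E"
    and "\<And>u v. E u v \<Longrightarrow> col (phi u) (phi v) \<longleftrightarrow> (u \<in> X \<longleftrightarrow> v \<in> X)"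
  shows "colour_count W E phi col True = card (inner_edges E X)"
    and "colour_count W E phi col False = card (cut_edges E X)"
proof -
  have "{e \<in> edges W E. \<exists>u v. e = {u, v} \<and> E u v \<and> col (phi u) (phi v) = c}
      = {{u, v} | u v. E u v \<and> (u \<in> X \<longleftrightarrow> v \<in> X) = c}" for c
    using assms(2) simple_graphD(4,5)[OF assms(1)] unfolding edges_def by blast
  note sides = this
  show "colour_count W E phi col True = card (inner_edges E X)"
    unfolding colour_count_def sides[of True] by (simp add: inner_edges_def)
  show "colour_count W E phi col False = card (cut_edges E X)"
    unfolding colour_count_def sides[of False] by (simp add: cut_edges_altdef[OF assms(1)])
qed

lemma partition_copy:
  assumes "finite W" and "X \<subseteq> W" and "finite A" and "finite B" and "A \<inter> B = {}"
    and "card X = card A" and "card (W - X) = card B"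
  obtains phi where "inj_on phi W" and "phi ` X = A" and "phi ` (W - X) = B"
proof -
  obtain f where f: "bij_betw f X A"
    using finite_same_card_bij[OF finite_subset[OF assms(2,1)] assms(3,6)] by blast
  obtain g where g: "bij_betw g (W - X) B"
    using finite_same_card_bij[OF finite_Diff[OF assms(1)] assms(4,7)] by blast
  define phi where "phi u = (if u \<in> X then f u else g u)" for u
  have "bij_betw phi X A" using f by (rule bij_betw_cong[THEN iffD1, rotated]) (simp add: phi_def)
  moreover have "bij_betw phi (W - X) B" using g by (rule bij_betw_cong[THEN iffD1, rotated]) (simp add: phi_def)
  ultimately have "bij_betw phi (X \<union> (W - X)) (A \<union> B)" by (rule bij_betw_combine[OF _ _ assms(5)])
  moreover have "X \<union> (W - X) = W" using assms(2) by blast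
  ultimately show ?thesis
    using that \<open>bij_betw phi X A\<close> \<open>bij_betw phi (W - X) B\<close> unfolding bij_betw_def by metis
qed

lemma copy_in_two_cliques:
  assumes "simple_graph W E" and "X \<subseteq> W" and "A \<union> B = V" and "A \<inter> B = {}" and "finite V"
    and "card X = card A" and "card W = card V"
    and "\<forall>u v. u \<in> V \<and> v \<in> V \<and> u \<noteq> v \<longrightarrow>
           (col u v \<longleftrightarrow> (u \<in> A \<and> v \<in> A) \<or> (u \<in> B \<and> v \<in> B))"
  obtains phi where "is_copy W phi V"
    and "colour_count W E phi col True = card (inner_edges E X)"
    and "colour_count W E phi col False = card (cut_edges E X)"
proof -
  have "finite A" "finite B" using assms(3,5) by auto
  moreover have "card (W - X) = card B"
    using card_Diff_subset[OF finite_subset[OF assms(2) simple_graphD(1)[OF assms(1)]] assms(2)]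
      card_Un_disjoint[OF \<open>finite A\<close> \<open>finite B\<close> assms(4)] assms(3,6,7) by simp
  ultimately obtain phi where phi: "inj_on phi W" "phi ` X = A" "phi ` (W - X) = B"
    using partition_copy[OF simple_graphD(1)[OF assms(1)] assms(2) _ _ assms(4,6)] by blast
  have "phi ` W = V" using phi(2,3) assms(2,3) by blast
  have side: "phi u \<in> A \<longleftrightarrow> u \<in> X" "phi u \<in> B \<longleftrightarrow> u \<notin> X" if "u \<in> W" for u
    using that phi(2,3) assms(4) by blast+
  have colour: "col (phi u) (phi v) \<longleftrightarrow> (u \<in> X \<longleftrightarrow> v \<in> X)" if "E u v" for u v
  proof -
    have "u \<in> W" "v \<in> W" "u \<noteq> v" using that simple_graphD(3-5)[OF assms(1)] by blast+
    then have "phi u \<in> V" "phi v \<in> V" "phi u \<noteq> phi v"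
      using \<open>phi ` W = V\<close> phi(1) by (auto dest: inj_onD)
    then show ?thesis using assms(8) side \<open>u \<in> W\<close> \<open>v \<in> W\<close> by blast
  qed
  show ?thesis
    by (rule that) (use phi(1) \<open>phi ` W = V\<close> colour_count_by_sides[of W E col phi X, OF assms(1) colour] in
      \<open>simp_all add: is_copy_def\<close>)
qed

theorem lemma3p9:
  fixes k :: nat
    and W :: "'a set" and E :: "'a \<Rightarrow> 'a \<Rightarrow> bool"
    and V :: "'b set" and col :: "'b \<Rightarrow> 'b \<Rightarrow> bool"
    and A B :: "'b set"
  assumes "k \<ge> 1"
    and "two_factor W E" and "card W = 4 * k"
    and "finite V" and "card V = 4 * k"
    and "A \<union> B = V" and "A \<inter> B = {}" and "card A = 2 * k" and "card B = 2 * k"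
    and "\<forall>u v. u \<in> V \<and> v \<in> V \<and> u \<noteq> v \<longrightarrow>
           (col u v \<longleftrightarrow> (u \<in> A \<and> v \<in> A) \<or> (u \<in> B \<and> v \<in> B))"
  shows "(\<exists>phi. is_copy W phi V \<and> colour_count W E phi col True \<ge> 4 * k - 2)
       \<and> (\<exists>phi. is_copy W phi V \<and> 3 * colour_count W E phi col False \<ge> 8 * k)"
proof -
  have graph: "simple_graph W E" and degree: "\<forall>v\<in>W. card (neighbours W E v) \<le> 2"
    using assms(2) unfolding two_factor_def neighbours_def by simp_all
  have edges: "card (inner_edges E X) + card (cut_edges E X) = 4 * k" for X
    using card_inner_edges_plus_card_cut_edges[OF graph] card_edges_two_factor[OF assms(2)] assms(3)
    by simp
  note copy = copy_in_two_cliques[OF graph _ assms(6,7,4) _ _ assms(10)]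
  obtain X where "X \<subseteq> W" "card X = 2 * k" "card (cut_edges E X) \<le> 2"
    using exists_subset_with_small_cut[OF graph degree, of "2 * k"] assms(3) by auto
  moreover from this obtain phi where "is_copy W phi V"
      "colour_count W E phi col True = card (inner_edges E X)"
    using copy assms(3,5,8) by metis
  ultimately have red: "\<exists>phi. is_copy W phi V \<and> colour_count W E phi col True \<ge> 4 * k - 2"
    using edges[of X] by (intro exI[of _ phi]) linarith
  from exists_balanced_with_few_inner_edges[OF graph degree]
  obtain Y where "Y \<subseteq> W" "balanced W Y" "3 * card (inner_edges E Y) \<le> card W"
    by (blast dest: add_leD1)
  moreover from this have "card Y = 2 * k"
    using card_balanced_even[OF simple_graphD(1)[OF graph]] assms(3) by simp
  moreover from calculation obtain psi where "is_copy W psi V"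
      "colour_count W E psi col False = card (cut_edges E Y)"
    using copy assms(3,5,8) by metis
  ultimately have blue: "\<exists>phi. is_copy W phi V \<and> 3 * colour_count W E phi col False \<ge> 8 * k"
    using edges[of Y] assms(3) by (intro exI[of _ psi]) linarith
  from red blue show ?thesis ..
qed

end
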